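(* Fix real numbers $r_1,\dots,r_m\in[0,1]$. Then the set $W(r_1,\dots,r_m)=\{\mathbf{x}\in\mathcal{C}_n:\mathbf{x}_T^{(j)}=r_j\text{ for all }j\in[m]\}$ contains at most $2^{n(m+1)}$ Generalized Nash equilibria of $G^{(2)}$.
   Context: $G^{(2)}$ is a Fragile multi-CPR Game with $n\ge1$ players and $m\ge1$ CPRs: $[k]=\{1,\dots,k\}$, $C_m=\{(x_1,\dots,x_m)\in[0,1]^m:\sum_j x_j\le1\}$, $\mathcal{C}_n=\prod_{i\in[n]}C_m$, $\mathcal{C}_{-i}=\prod_{[n]\setminus\{i\}}C_m$. A profile is $\mathbf{x}=(\mathbf{x}_1,\dots,\mathbf{x}_n)$, $\mathbf{x}_i=(x_{i1},\dots,x_{im})$; write $\mathbf{x}=(\mathbf{x}_i,\mathbf{x}_{-i})$; $\mathbf{x}_T^{(j)}=\sum_i x_{ij}$, $\mathbf{x}_T^{j|i}=\sum_{\ell\ne i}x_{\ell j}$. Each CPR $j$ has return rate $\mathcal{R}_j(t)>1$ and failure probability $p_j(t)\in[0,1]$; each player $i$ has parameters $a_i,k_i$. $\mathcal{F}_{ij}(t)=(\mathcal{R}_j(t)-1)^{a_i}(1-p_j(t))-k_ip_j(t)$; utility $\mathcal{V}_i(\mathbf{x}_i;\mathbf{x}_{-i})=\sum_j x_{ij}^{a_i}\mathcal{F}_{ij}(\mathbf{x}_T^{(j)})$. Assumption: (1) $p_j(0)=0$, $p_j(t)=1$ for $t\ge1$; (2) $a_i\in(0,1]$, $k_i>0$;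 (3) each $\mathcal{F}_{ij}$ (continuous on $[0,1]$) has strictly negative first and second derivatives on $(0,1)$. $\omega_{ij}\in(0,1)$ is the unique zero of $\mathcal{F}_{ij}$ in $(0,1)$. $A(\mathbf{x}_{-i})=\{j:\mathbf{x}_T^{j|i}<\omega_{ij}\}$. $\vartheta_i(\mathbf{x}_{-i})=C_m\cap\big(\prod_{j\in A(\mathbf{x}_{-i})}[0,\omega_{ij}-\mathbf{x}_T^{j|i}]\times\prod_{j\notin A(\mathbf{x}_{-i})}\{0\}\big)$. A Generalized Nash equilibrium is $\mathbf{x}\in\mathcal{C}_n$ with, for all $i$, $\mathbf{x}_i\in\vartheta_i(\mathbf{x}_{-i})$ and $\mathcal{V}_i(\mathbf{x}_i;\mathbf{x}_{-i})\ge\mathcal{V}_i(\mathbf{z};\mathbf{x}_{-i})$ for all $\mathbf{z}\in\vartheta_i(\mathbf{x}_{-i})$. *)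

theory Defs
  imports "HOL-Analysis.Analysis"
begin

text \<open>Players are indexed by {1..n}, CPRs by {1..m}. A strategy of a player is a
function nat => real vanishing outside {1..m}; a profile is a function
nat => nat => real vanishing outside {1..n} x {1..m}.\<close>

definition simplexC :: "nat \<Rightarrow> (nat \<Rightarrow> real) set" where
  "simplexC m = {y. (\<forall>j. j \<notin> {1..m} \<longrightarrow> y j = 0)
                   \<and> (\<forall>j\<in>{1..m}. 0 \<le> y j \<and> y j \<le> 1)
                   \<and> (\<Sum>j=1..m. y j) \<le> 1}"

definition profiles :: "nat \<Rightarrow> nat \<Rightarrow> (nat \<Rightarrow> nat \<Rightarrow> real) set" where
  "profiles n m = {x. (\<forall>i. i \<notin> {1..n} \<longrightarrow> x i = (\<lambda>_. 0))
                     \<and> (\<forall>i\<in>{1..n}. x i \<in> simplexC m)}"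

definition totalInv :: "nat \<Rightarrow> (nat \<Rightarrow> nat \<Rightarrow> real) \<Rightarrow> nat \<Rightarrow> real" where
  "totalInv n x j = (\<Sum>i=1..n. x i j)"

definition othersInv :: "nat \<Rightarrow> (nat \<Rightarrow> nat \<Rightarrow> real) \<Rightarrow> nat \<Rightarrow> nat \<Rightarrow> real" where
  "othersInv n x i j = (\<Sum>l\<in>{1..n} - {i}. x l j)"

definition Ffun :: "(nat \<Rightarrow> real) \<Rightarrow> (nat \<Rightarrow> real) \<Rightarrow> (nat \<Rightarrow> real \<Rightarrow> real)
                    \<Rightarrow> (nat \<Rightarrow> real \<Rightarrow> real) \<Rightarrow> nat \<Rightarrow> nat \<Rightarrow> real \<Rightarrow> real" where
  "Ffun a k R p i j t = (R j t - 1) powr (a i) * (1 - p j t) - k i * p j t"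

definition Vutil :: "nat \<Rightarrow> nat \<Rightarrow> (nat \<Rightarrow> real) \<Rightarrow> (nat \<Rightarrow> real) \<Rightarrow> (nat \<Rightarrow> real \<Rightarrow> real)
                    \<Rightarrow> (nat \<Rightarrow> real \<Rightarrow> real) \<Rightarrow> nat \<Rightarrow> (nat \<Rightarrow> nat \<Rightarrow> real) \<Rightarrow> real" where
  "Vutil n m a k R p i x = (\<Sum>j=1..m. x i j powr (a i) * Ffun a k R p i j (totalInv n x j))"

definition omega :: "(nat \<Rightarrow> real) \<Rightarrow> (nat \<Rightarrow> real) \<Rightarrow> (nat \<Rightarrow> real \<Rightarrow> real)
                    \<Rightarrow> (nat \<Rightarrow> real \<Rightarrow> real) \<Rightarrow> nat \<Rightarrow> nat \<Rightarrow> real" where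
  "omega a k R p i j = (THE t. t \<in> {0<..<1} \<and> Ffun a k R p i j t = 0)"

definition theta :: "nat \<Rightarrow> nat \<Rightarrow> (nat \<Rightarrow> real) \<Rightarrow> (nat \<Rightarrow> real) \<Rightarrow> (nat \<Rightarrow> real \<Rightarrow> real)
                    \<Rightarrow> (nat \<Rightarrow> real \<Rightarrow> real) \<Rightarrow> nat \<Rightarrow> (nat \<Rightarrow> nat \<Rightarrow> real) \<Rightarrow> (nat \<Rightarrow> real) set" where
  "theta n m a k R p i x = {z \<in> simplexC m. \<forall>j\<in>{1..m}.
      (if othersInv n x i j < omega a k R p i j
       then 0 \<le> z j \<and> z j \<le> omega a k R p i j - othersInv n x i j
       else z j = 0)}"

definition isGNE :: "nat \<Rightarrow> nat \<Rightarrow> (nat \<Rightarrow> real) \<Rightarrow> (nat \<Rightarrow> real) \<Rightarrow> (nat \<Rightarrow> real \<Rightarrow> real)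
                    \<Rightarrow> (nat \<Rightarrow> real \<Rightarrow> real) \<Rightarrow> (nat \<Rightarrow> nat \<Rightarrow> real) \<Rightarrow> bool" where
  "isGNE n m a k R p x \<longleftrightarrow> x \<in> profiles n m \<and>
     (\<forall>i\<in>{1..n}. x i \<in> theta n m a k R p i x \<and>
        (\<forall>z\<in>theta n m a k R p i x. Vutil n m a k R p i (x(i := z)) \<le> Vutil n m a k R p i x))"

definition Wset :: "nat \<Rightarrow> nat \<Rightarrow> (nat \<Rightarrow> real) \<Rightarrow> (nat \<Rightarrow> nat \<Rightarrow> real) set" where
  "Wset n m r = {x \<in> profiles n m. \<forall>j\<in>{1..m}. totalInv n x j = r j}"

end

theory Submission
  imports Defs
begin

(* At an equilibrium x in W(r) the total investment in CPR j is the constant r_j, so the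
   marginal payoff of player i from CPR j at own investment t > 0 is
   a_i t^(a_i - 1) F_ij(r_j) + t^a_i F'_ij(r_j), a function of t alone. Positive investment
   forces r_j < omega_ij (otherwise halving it pays), where F_ij > 0 > F'_ij, so this marginal
   is strictly decreasing in t. The first-order conditions of player i's best response make the
   marginals equal across the support of x_i, and zero when i's budget is slack. Hence x_i is
   determined by its support and by whether its budget binds, and the equilibria in W(r)
   inject into the subsets of [n] x {0, ..., m}. *)

lemma DERIV_exchange_le:
  fixes f g :: "real \<Rightarrow> real"
  assumes df: "(f has_real_derivative Df) (at u)" and dg: "(g has_real_derivative Dg) (at v)"
    and "d > 0" and no_gain: "\<And>e. 0 < e \<Longrightarrow> e < d \<Longrightarrow> f (u + e) + g (v - e) \<le> f u + g v"
  shows "Df \<le> Dg"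
proof (rule ccontr)
  assume "\<not> Df \<le> Dg"
  define H where "H e = f (u + e) + g (v - e)" for e
  have "(H has_real_derivative Df - Dg) (at 0)"
  proof -
    have "((\<lambda>e. f (u + e)) has_real_derivative Df * 1) (at 0)"
      by (rule DERIV_chain2[of f]) (use df in simp, auto intro!: derivative_eq_intros)
    moreover have "((\<lambda>e. g (v - e)) has_real_derivative Dg * -1) (at 0)"
      by (rule DERIV_chain2[of g]) (use dg in simp, auto intro!: derivative_eq_intros)
    ultimately show ?thesis
      unfolding H_def using DERIV_add by fastforce
  qed
  then obtain d' where "d' > 0" and gain: "\<And>h. 0 < h \<Longrightarrow> h < d' \<Longrightarrow> H 0 < H h"
    using DERIV_pos_inc_right \<open>\<not> Df \<le> Dg\<close> by force
  define e where "e = min d d' / 2"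
  have "0 < e" "e < d" "e < d'" using \<open>d > 0\<close> \<open>d' > 0\<close> by (auto simp: e_def)
  then show False using gain[of e] no_gain[of e] by (simp add: H_def)
qed

lemma DERIV_nonpos_of_right_max:
  fixes f :: "real \<Rightarrow> real"
  assumes "(f has_real_derivative Df) (at u)" and "d > 0"
    and "\<And>e. 0 < e \<Longrightarrow> e < d \<Longrightarrow> f (u + e) \<le> f u"
  shows "Df \<le> 0"
  using DERIV_exchange_le[OF assms(1) DERIV_const[of 0 "at 0"] assms(2)] assms(3) by simp

lemma DERIV_nonneg_of_left_max:
  fixes f :: "real \<Rightarrow> real"
  assumes "(f has_real_derivative Df) (at u)" and "d > 0"
    and "\<And>e. 0 < e \<Longrightarrow> e < d \<Longrightarrow> f (u - e) \<le> f u"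
  shows "0 \<le> Df"
  using DERIV_exchange_le[OF DERIV_const[of 0 "at 0"] assms(1) assms(2)] assms(3) by simp

lemma DERIV_powr_mult_shift:
  fixes F :: "real \<Rightarrow> real"
  assumes "t > 0" and "(F has_real_derivative D) (at (c + t))"
  shows "((\<lambda>s. s powr a * F (c + s)) has_real_derivative
           a * t powr (a - 1) * F (c + t) + t powr a * D) (at t)"
proof -
  have "((\<lambda>s. F (c + s)) has_real_derivative D * 1) (at t)"
    by (rule DERIV_chain2[of F]) (use assms(2) in simp, auto intro!: derivative_eq_intros)
  then show ?thesis
    using assms(1) by (auto intro!: derivative_eq_intros)
qed

lemma powr_marginal_strict_antimono:
  fixes a c d s t :: real
  assumes "0 < a" "a \<le> 1" "c > 0" "d < 0" "0 < s" "s < t"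
  shows "a * t powr (a - 1) * c + t powr a * d < a * s powr (a - 1) * c + s powr a * d"
proof -
  have "t powr (a - 1) \<le> s powr (a - 1)"
    using powr_mono2'[of "a - 1" s t] assms by auto
  then have "a * t powr (a - 1) * c \<le> a * s powr (a - 1) * c"
    using assms by auto
  moreover have "t powr a * d < s powr a * d"
    using powr_less_mono2[of a s t] assms by (simp add: mult_strict_right_mono_neg)
  ultimately show ?thesis by linarith
qed

lemma sum_fun_upd:
  fixes H :: "'a \<Rightarrow> 'b \<Rightarrow> 'c::ab_group_add"
  assumes "finite A" "j \<in> A"
  shows "(\<Sum>l\<in>A. H l ((w(j := u)) l)) = (\<Sum>l\<in>A. H l (w l)) - H j (w j) + H j u"
proof -
  have "(\<Sum>l\<in>A - {j}. H l ((w(j := u)) l)) = (\<Sum>l\<in>A - {j}. H l (w l))"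
    by (rule sum.cong) auto
  then show ?thesis
    using sum.remove[OF assms, of "\<lambda>l. H l ((w(j := u)) l)"]
      sum.remove[OF assms, of "\<lambda>l. H l (w l)"]
    by simp
qed

lemma totalInv_split: "i \<in> {1..n} \<Longrightarrow> totalInv n x j = othersInv n x i j + x i j"
  unfolding totalInv_def othersInv_def using sum.remove[of "{1..n}" i "\<lambda>l. x l j"] by simp

lemma othersInv_fun_upd [simp]: "othersInv n (x(i := z)) i j = othersInv n x i j"
  unfolding othersInv_def by (rule sum.cong) auto

lemma othersInv_nonneg: "x \<in> profiles n m \<Longrightarrow> j \<in> {1..m} \<Longrightarrow> 0 \<le> othersInv n x i j"
  unfolding othersInv_def by (intro sum_nonneg) (auto simp: profiles_def simplexC_def)

lemma GNE_in_profiles: "isGNE n m a k R p x \<Longrightarrow> x \<in> profiles n m"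
  by (simp add: isGNE_def)

locale fragile_cpr_game =
  fixes n m :: nat and R p :: "nat \<Rightarrow> real \<Rightarrow> real" and a k :: "nat \<Rightarrow> real"
    and DF :: "nat \<Rightarrow> nat \<Rightarrow> real \<Rightarrow> real"
  assumes R_gt: "\<forall>j\<in>{1..m}. \<forall>t\<ge>0. R j t > 1"
    and p0: "\<forall>j\<in>{1..m}. p j 0 = 0"
    and p1: "\<forall>j\<in>{1..m}. \<forall>t\<ge>1. p j t = 1"
    and a_range: "\<forall>i\<in>{1..n}. 0 < a i \<and> a i \<le> 1"
    and k_pos: "\<forall>i\<in>{1..n}. k i > 0"
    and F_cont: "\<forall>i\<in>{1..n}. \<forall>j\<in>{1..m}. continuous_on {0..1} (Ffun a k R p i j)"
    and DF: "\<forall>i\<in>{1..n}. \<forall>j\<in>{1..m}. \<forall>t\<in>{0<..<1}.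
        (Ffun a k R p i j has_real_derivative DF i j t) (at t) \<and> DF i j t < 0"
begin

abbreviation "F \<equiv> Ffun a k R p"
abbreviation "w \<equiv> omega a k R p"

lemma Ffun_strict_antimono:
  assumes "i \<in> {1..n}" "j \<in> {1..m}" "0 \<le> s" "s < t" "t \<le> 1"
  shows "F i j t < F i j s"
proof (rule DERIV_neg_imp_decreasing_open[OF \<open>s < t\<close>])
  show "\<exists>y. (F i j has_real_derivative y) (at u) \<and> y < 0" if "s < u" "u < t" for u
    using DF assms that by (intro exI[of _ "DF i j u"]) auto
  show "continuous_on {s..t} (F i j)"
    using continuous_on_subset[of "{0..1}" "F i j" "{s..t}"] F_cont assms by auto
qed

lemma Ffun_0_pos: "j \<in> {1..m} \<Longrightarrow> F i j 0 > 0"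
  using R_gt p0 by (simp add: Ffun_def order.strict_iff_order)

lemma Ffun_1_neg: "i \<in> {1..n} \<Longrightarrow> j \<in> {1..m} \<Longrightarrow> F i j 1 < 0"
  using p1 k_pos by (simp add: Ffun_def)

lemma omega_root:
  assumes i: "i \<in> {1..n}" and j: "j \<in> {1..m}"
  shows "0 < w i j" "w i j < 1" "F i j (w i j) = 0"
proof -
  obtain t where t01: "0 \<le> t" "t \<le> 1" and root: "F i j t = 0"
    using IVT2'[of "F i j" 1 0 0] Ffun_0_pos[OF j, where i = i] Ffun_1_neg[OF i j] F_cont i j
    by fastforce
  have "t \<noteq> 0" "t \<noteq> 1"
    using root Ffun_0_pos[OF j, where i = i] Ffun_1_neg[OF i j] by auto
  with t01 root have t: "t \<in> {0<..<1}" "F i j t = 0"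
    by auto
  have "s = t" if s: "s \<in> {0<..<1}" "F i j s = 0" for s
    using Ffun_strict_antimono[OF i j, of s t] Ffun_strict_antimono[OF i j, of t s] s t
    by (cases s t rule: linorder_cases) auto
  then have "\<exists>!t. t \<in> {0<..<1} \<and> F i j t = 0"
    using t by blast
  from theI'[OF this] show "0 < w i j" "w i j < 1" "F i j (w i j) = 0"
    unfolding omega_def by auto
qed

lemma Ffun_pos_below_omega:
  "i \<in> {1..n} \<Longrightarrow> j \<in> {1..m} \<Longrightarrow> 0 \<le> t \<Longrightarrow> t < w i j \<Longrightarrow> F i j t > 0"
  using Ffun_strict_antimono[of i j t "w i j"] omega_root[of i j] by auto

definition payoff :: "nat \<Rightarrow> (nat \<Rightarrow> nat \<Rightarrow> real) \<Rightarrow> nat \<Rightarrow> real \<Rightarrow> real" where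
  "payoff i x j t = t powr a i * F i j (othersInv n x i j + t)"

text \<open>The derivative of payoff i x j at t whenever othersInv n x i j + t = \<rho>.\<close>
definition marginal :: "nat \<Rightarrow> nat \<Rightarrow> real \<Rightarrow> real \<Rightarrow> real" where
  "marginal i j \<rho> t = a i * t powr (a i - 1) * F i j \<rho> + t powr a i * DF i j \<rho>"

lemma payoff_fun_upd [simp]: "payoff i (x(i := z)) = payoff i x"
  by (simp add: payoff_def fun_eq_iff)

lemma Vutil_eq_sum_payoff:
  "i \<in> {1..n} \<Longrightarrow> Vutil n m a k R p i x = (\<Sum>j=1..m. payoff i x j (x i j))"
  unfolding Vutil_def payoff_def using totalInv_split[of i n x] by simp

lemma marginal_strict_antimono:
  assumes "i \<in> {1..n}" "j \<in> {1..m}" "0 < \<rho>" "\<rho> < w i j" "0 < s" "s < t"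
  shows "marginal i j \<rho> t < marginal i j \<rho> s"
proof -
  have "F i j \<rho> > 0"
    using Ffun_pos_below_omega assms by simp
  moreover have "DF i j \<rho> < 0"
    using DF omega_root[of i j] assms by auto
  ultimately show ?thesis
    unfolding marginal_def using powr_marginal_strict_antimono[of "a i"] a_range assms by simp
qed

context
  fixes x :: "nat \<Rightarrow> nat \<Rightarrow> real" and i :: nat
  assumes gne: "isGNE n m a k R p x" and i: "i \<in> {1..n}"
begin

lemma GNE_strategy_bounds:
  "\<And>j. j \<notin> {1..m} \<Longrightarrow> x i j = 0"
  "\<And>j. j \<in> {1..m} \<Longrightarrow> 0 \<le> x i j"
  "(\<Sum>j=1..m. x i j) \<le> 1"
  using GNE_in_profiles[OF gne] i by (auto simp: profiles_def simplexC_def)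

lemma GNE_best_response:
  "z \<in> theta n m a k R p i x \<Longrightarrow> Vutil n m a k R p i (x(i := z)) \<le> Vutil n m a k R p i x"
  using gne i by (simp add: isGNE_def)

lemma GNE_feasible: "x i \<in> theta n m a k R p i x"
  using gne i by (simp add: isGNE_def)

lemma GNE_below_omega:
  assumes "j \<in> {1..m}" "x i j > 0"
  shows "othersInv n x i j < w i j" "x i j \<le> w i j - othersInv n x i j"
proof -
  have "if othersInv n x i j < w i j then 0 \<le> x i j \<and> x i j \<le> w i j - othersInv n x i j
      else x i j = 0"
    using GNE_feasible assms(1) by (simp add: theta_def)
  with assms(2) show "othersInv n x i j < w i j" "x i j \<le> w i j - othersInv n x i j"
    by (auto split: if_splits)
qed

lemma deviation_in_theta:
  assumes same: "\<And>q. q \<notin> {1..m} \<Longrightarrow> z q = x i q"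
    and avail: "\<And>q. q \<in> {1..m} \<Longrightarrow> z q \<noteq> x i q \<Longrightarrow>
      othersInv n x i q < w i q \<and> 0 \<le> z q \<and> z q \<le> w i q - othersInv n x i q"
    and budget: "(\<Sum>q=1..m. z q) \<le> 1"
  shows "z \<in> theta n m a k R p i x"
proof -
  have "0 \<le> z q \<and> z q \<le> 1" if q: "q \<in> {1..m}" for q
  proof (cases "z q = x i q")
    case True
    then show ?thesis using GNE_feasible q by (simp add: theta_def simplexC_def)
  next
    case False
    then show ?thesis
      using avail[OF q] omega_root[OF i q] othersInv_nonneg[OF GNE_in_profiles[OF gne] q, of i]
      by auto
  qed
  moreover have "if othersInv n x i q < w i q then 0 \<le> z q \<and> z q \<le> w i q - othersInv n x i q
      else z q = 0" if q: "q \<in> {1..m}" for q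
    using GNE_feasible q avail[OF q] by (cases "z q = x i q") (auto simp: theta_def)
  ultimately show ?thesis
    using same GNE_strategy_bounds(1) budget by (auto simp: theta_def simplexC_def)
qed

lemma GNE_no_gain_single:
  assumes j: "j \<in> {1..m}" and avail: "othersInv n x i j < w i j"
    and u: "0 \<le> u" "u \<le> w i j - othersInv n x i j"
    and budget: "(\<Sum>q=1..m. x i q) - x i j + u \<le> 1"
  shows "payoff i x j u \<le> payoff i x j (x i j)"
proof -
  have "(x i)(j := u) \<in> theta n m a k R p i x"
    using j avail u budget sum_fun_upd[of "{1..m}" j "\<lambda>_ t. t" "x i" u]
    by (intro deviation_in_theta) auto
  then have "Vutil n m a k R p i (x(i := (x i)(j := u))) \<le> Vutil n m a k R p i x"
    by (rule GNE_best_response)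
  then show ?thesis
    using Vutil_eq_sum_payoff[OF i] sum_fun_upd[of "{1..m}" j "payoff i x" "x i" u] j
    by simp
qed

lemma GNE_no_gain_transfer:
  assumes j: "j \<in> {1..m}" and l: "l \<in> {1..m}" and "j \<noteq> l"
    and avail: "othersInv n x i j < w i j" and e: "0 < e" "e \<le> x i l"
    and room: "x i j + e \<le> w i j - othersInv n x i j"
  shows "payoff i x j (x i j + e) + payoff i x l (x i l - e)
         \<le> payoff i x j (x i j) + payoff i x l (x i l)"
proof -
  let ?z = "(x i)(j := x i j + e, l := x i l - e)"
  have "?z \<in> theta n m a k R p i x"
  proof (rule deviation_in_theta)
    show "?z q = x i q" if "q \<notin> {1..m}" for q
      using that j l by auto
    show "othersInv n x i q < w i q \<and> 0 \<le> ?z q \<and> ?z q \<le> w i q - othersInv n x i q"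
      if "q \<in> {1..m}" "?z q \<noteq> x i q" for q
      using that avail e room GNE_strategy_bounds(2)[OF j] GNE_below_omega[OF l]
      by (auto split: if_splits)
    show "(\<Sum>q=1..m. ?z q) \<le> 1"
      using sum_fun_upd[of "{1..m}" l "\<lambda>_ t. t" "(x i)(j := x i j + e)" "x i l - e"]
        sum_fun_upd[of "{1..m}" j "\<lambda>_ t. t" "x i" "x i j + e"] GNE_strategy_bounds(3) j l \<open>j \<noteq> l\<close>
      by simp
  qed
  then have "Vutil n m a k R p i (x(i := ?z)) \<le> Vutil n m a k R p i x"
    by (rule GNE_best_response)
  then show ?thesis
    using Vutil_eq_sum_payoff[OF i] j l \<open>j \<noteq> l\<close>
      sum_fun_upd[of "{1..m}" l "payoff i x" "(x i)(j := x i j + e)" "x i l - e"]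
      sum_fun_upd[of "{1..m}" j "payoff i x" "x i" "x i j + e"]
    by simp
qed

lemma GNE_totalInv_lt_omega:
  assumes j: "j \<in> {1..m}" and pos: "x i j > 0"
  shows "totalInv n x j < w i j"
proof (rule ccontr)
  assume "\<not> totalInv n x j < w i j"
  then have at_root: "othersInv n x i j + x i j = w i j"
    using GNE_below_omega[OF j pos] totalInv_split[OF i] by (simp add: not_less)
  have "F i j (othersInv n x i j + x i j / 2) > 0"
    using Ffun_pos_below_omega[OF i j] othersInv_nonneg[OF GNE_in_profiles[OF gne] j] at_root pos
    by simp
  then have "payoff i x j (x i j / 2) > 0"
    using pos by (simp add: payoff_def)
  moreover have "payoff i x j (x i j / 2) \<le> payoff i x j (x i j)"
    using GNE_no_gain_single[OF j GNE_below_omega(1)[OF j pos]] pos at_root GNE_strategy_bounds(3)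
    by simp
  moreover have "payoff i x j (x i j) = 0"
    using at_root omega_root[OF i j] by (simp add: payoff_def)
  ultimately show False by simp
qed

lemma GNE_payoff_has_marginal:
  assumes j: "j \<in> {1..m}" and pos: "x i j > 0"
  shows "(payoff i x j has_real_derivative marginal i j (totalInv n x j) (x i j)) (at (x i j))"
proof -
  have "0 < totalInv n x j" "totalInv n x j < 1"
    using totalInv_split[OF i] othersInv_nonneg[OF GNE_in_profiles[OF gne] j, of i] pos
      GNE_totalInv_lt_omega[OF j pos] omega_root[OF i j] by auto
  then have "(F i j has_real_derivative DF i j (totalInv n x j)) (at (othersInv n x i j + x i j))"
    using DF i j totalInv_split[OF i] by auto
  from DERIV_powr_mult_shift[OF pos this, of "a i"] show ?thesis
    unfolding payoff_def marginal_def using totalInv_split[OF i] by simp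
qed

lemma GNE_marginal_le:
  assumes j: "j \<in> {1..m}" and l: "l \<in> {1..m}" and "j \<noteq> l"
    and pos: "x i j > 0" "x i l > 0"
  shows "marginal i j (totalInv n x j) (x i j) \<le> marginal i l (totalInv n x l) (x i l)"
proof (rule DERIV_exchange_le[OF GNE_payoff_has_marginal[OF j pos(1)]
                                  GNE_payoff_has_marginal[OF l pos(2)]])
  show "0 < min (x i l) (w i j - totalInv n x j)"
    using pos GNE_totalInv_lt_omega[OF j pos(1)] by simp
  fix e assume "0 < e" "e < min (x i l) (w i j - totalInv n x j)"
  then show "payoff i x j (x i j + e) + payoff i x l (x i l - e)
      \<le> payoff i x j (x i j) + payoff i x l (x i l)"
    using GNE_no_gain_transfer[OF j l \<open>j \<noteq> l\<close> GNE_below_omega(1)[OF j pos(1)]]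
      totalInv_split[OF i, of x j]
    by simp
qed

lemma GNE_marginal_nonpos_if_slack:
  assumes j: "j \<in> {1..m}" and pos: "x i j > 0" and slack: "(\<Sum>q=1..m. x i q) < 1"
  shows "marginal i j (totalInv n x j) (x i j) \<le> 0"
proof (rule DERIV_nonpos_of_right_max[OF GNE_payoff_has_marginal[OF j pos]])
  show "0 < min (1 - (\<Sum>q=1..m. x i q)) (w i j - totalInv n x j)"
    using slack GNE_totalInv_lt_omega[OF j pos] by simp
  fix e assume "0 < e" "e < min (1 - (\<Sum>q=1..m. x i q)) (w i j - totalInv n x j)"
  then show "payoff i x j (x i j + e) \<le> payoff i x j (x i j)"
    using GNE_no_gain_single[OF j GNE_below_omega(1)[OF j pos]] pos totalInv_split[OF i, of x j]
    by simp
qed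

lemma GNE_marginal_nonneg:
  assumes j: "j \<in> {1..m}" and pos: "x i j > 0"
  shows "0 \<le> marginal i j (totalInv n x j) (x i j)"
proof (rule DERIV_nonneg_of_left_max[OF GNE_payoff_has_marginal[OF j pos] pos])
  fix e assume "0 < e" "e < x i j"
  then show "payoff i x j (x i j - e) \<le> payoff i x j (x i j)"
    using GNE_no_gain_single[OF j GNE_below_omega(1)[OF j pos]] GNE_below_omega(2)[OF j pos]
      GNE_strategy_bounds(3)
    by simp
qed

end

lemma GNE_strategy_le:
  assumes x: "isGNE n m a k R p x" and y: "isGNE n m a k R p y" and i: "i \<in> {1..n}"
    and total: "\<And>q. q \<in> {1..m} \<Longrightarrow> totalInv n y q = totalInv n x q"
    and support: "\<And>q. q \<in> {1..m} \<Longrightarrow> y i q > 0 \<longleftrightarrow> x i q > 0"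
    and binding: "(\<Sum>q=1..m. y i q) = 1 \<longleftrightarrow> (\<Sum>q=1..m. x i q) = 1"
    and j: "j \<in> {1..m}"
  shows "y i j \<le> x i j"
proof (rule ccontr)
  define \<mu>x where "\<mu>x q = marginal i q (totalInv n x q) (x i q)" for q
  define \<mu>y where "\<mu>y q = marginal i q (totalInv n x q) (y i q)" for q
  have \<mu>y_GNE: "\<mu>y q = marginal i q (totalInv n y q) (y i q)" if "q \<in> {1..m}" for q
    using total[OF that] by (simp add: \<mu>y_def)
  have antimono: "marginal i q (totalInv n x q) t < marginal i q (totalInv n x q) s"
    if q: "q \<in> {1..m}" and "x i q > 0" "0 < s" "s < t" for q s t
    using marginal_strict_antimono[OF i q _ GNE_totalInv_lt_omega[OF x i q]] that
      totalInv_split[OF i, of x q] othersInv_nonneg[OF GNE_in_profiles[OF x] q, of i]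
    by simp
  assume "\<not> y i j \<le> x i j"
  then have lt: "x i j < y i j" by simp
  have pos_xj: "x i j > 0" and pos_yj: "y i j > 0"
    using support[OF j] GNE_strategy_bounds(2)[OF x i j] lt by linarith+
  have "\<mu>y j < \<mu>x j"
    unfolding \<mu>x_def \<mu>y_def using antimono[OF j pos_xj pos_xj lt] .
  show False
  proof (cases "(\<Sum>q=1..m. x i q) = 1")
    case False
    then have "(\<Sum>q=1..m. x i q) < 1"
      using GNE_strategy_bounds(3)[OF x i] by linarith
    then have "\<mu>x j \<le> 0"
      unfolding \<mu>x_def by (rule GNE_marginal_nonpos_if_slack[OF x i j pos_xj])
    moreover have "0 \<le> \<mu>y j"
      unfolding \<mu>y_GNE[OF j] by (rule GNE_marginal_nonneg[OF y i j pos_yj])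
    ultimately show False
      using \<open>\<mu>y j < \<mu>x j\<close> by linarith
  next
    case True
    have "\<exists>l\<in>{1..m}. y i l < x i l"
    proof (rule ccontr)
      assume "\<not> ?thesis"
      then have "(\<Sum>q=1..m. x i q) < (\<Sum>q=1..m. y i q)"
        using sum_strict_mono_ex1[of "{1..m}" "x i" "y i"] j lt by force
      then show False
        using True binding by simp
    qed
    then obtain l where l: "l \<in> {1..m}" and lt_l: "y i l < x i l" ..
    have "j \<noteq> l"
      using lt lt_l by auto
    have pos_yl: "y i l > 0"
      using GNE_strategy_bounds(2)[OF y i l] lt_l support[OF l] by force
    then have pos_xl: "x i l > 0"
      using support[OF l] by simp
    have "\<mu>x l < \<mu>y l"
      unfolding \<mu>x_def \<mu>y_def using antimono[OF l pos_xl pos_yl lt_l] .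
    moreover have "\<mu>x j \<le> \<mu>x l"
      unfolding \<mu>x_def by (rule GNE_marginal_le[OF x i j l \<open>j \<noteq> l\<close> pos_xj pos_xl])
    moreover have "\<mu>y l \<le> \<mu>y j"
      unfolding \<mu>y_GNE[OF j] \<mu>y_GNE[OF l]
      by (rule GNE_marginal_le[OF y i l j \<open>j \<noteq> l\<close>[symmetric] pos_yl pos_yj])
    ultimately show False
      using \<open>\<mu>y j < \<mu>x j\<close> by linarith
  qed
qed

text \<open>The pair (i, 0) records that player i exhausts the budget.\<close>
definition support_signature :: "(nat \<Rightarrow> nat \<Rightarrow> real) \<Rightarrow> (nat \<times> nat) set" where
  "support_signature x =
     {(i, j). i \<in> {1..n} \<and> j \<in> {1..m} \<and> x i j > 0}
     \<union> {(i, 0) | i. i \<in> {1..n} \<and> (\<Sum>j=1..m. x i j) = 1}"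

lemma support_signature_inj_on_GNE:
  "inj_on support_signature {x \<in> Wset n m r. isGNE n m a k R p x}"
proof (rule inj_onI)
  fix x y
  assume "x \<in> {x \<in> Wset n m r. isGNE n m a k R p x}" "y \<in> {x \<in> Wset n m r. isGNE n m a k R p x}"
  then have x: "isGNE n m a k R p x" and y: "isGNE n m a k R p y"
    and total: "\<And>q. q \<in> {1..m} \<Longrightarrow> totalInv n y q = totalInv n x q"
    by (auto simp: Wset_def)
  assume sig: "support_signature x = support_signature y"
  have "x i = y i" for i
  proof (cases "i \<in> {1..n}")
    case i: True
    have support: "y i q > 0 \<longleftrightarrow> x i q > 0" if "q \<in> {1..m}" for q
      using sig i that unfolding support_signature_def by (auto simp: set_eq_iff)
    have binding: "(\<Sum>q=1..m. y i q) = 1 \<longleftrightarrow> (\<Sum>q=1..m. x i q) = 1"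
      using sig i unfolding support_signature_def by (auto simp: set_eq_iff)
    have "y i j = x i j" for j
      using GNE_strategy_le[OF x y i total support binding]
        GNE_strategy_le[OF y x i total[symmetric] support[symmetric] binding[symmetric]]
        GNE_strategy_bounds(1)[OF x i] GNE_strategy_bounds(1)[OF y i]
      by (cases "j \<in> {1..m}") (auto intro: order.antisym)
    then show ?thesis by auto
  next
    case False
    then show ?thesis
      using GNE_in_profiles[OF x] GNE_in_profiles[OF y] by (simp add: profiles_def)
  qed
  then show "x = y" by auto
qed

lemma card_GNE_le:
  "finite {x \<in> Wset n m r. isGNE n m a k R p x}
   \<and> card {x \<in> Wset n m r. isGNE n m a k R p x} \<le> 2 ^ (n * (m + 1))"
proof -
  have into: "support_signature ` {x \<in> Wset n m r. isGNE n m a k R p x}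
      \<subseteq> Pow ({1..n} \<times> {0..m})"
    by (auto simp: support_signature_def)
  have "card (Pow ({1..n} \<times> {0..m})) = 2 ^ (n * (m + 1))"
    by (simp add: card_Pow card_cartesian_product)
  then show ?thesis
    using inj_on_finite[OF support_signature_inj_on_GNE into]
      card_inj_on_le[OF support_signature_inj_on_GNE into]
    by simp
qed

end

theorem theorem10:
  fixes n m :: nat
    and R p :: "nat \<Rightarrow> real \<Rightarrow> real"
    and a k r :: "nat \<Rightarrow> real"
  assumes "n \<ge> 1" and "m \<ge> 1"
    and R_gt: "\<forall>j\<in>{1..m}. \<forall>t\<ge>0. R j t > 1"
    and p_range: "\<forall>j\<in>{1..m}. \<forall>t\<ge>0. 0 \<le> p j t \<and> p j t \<le> 1"
    and p0: "\<forall>j\<in>{1..m}. p j 0 = 0"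
    and p1: "\<forall>j\<in>{1..m}. \<forall>t\<ge>1. p j t = 1"
    and a_range: "\<forall>i\<in>{1..n}. 0 < a i \<and> a i \<le> 1"
    and k_pos: "\<forall>i\<in>{1..n}. k i > 0"
    and F_cont: "\<forall>i\<in>{1..n}. \<forall>j\<in>{1..m}. continuous_on {0..1} (Ffun a k R p i j)"
    and F_deriv: "\<forall>i\<in>{1..n}. \<forall>j\<in>{1..m}. \<exists>F' F''. \<forall>t\<in>{0<..<1}.
        (Ffun a k R p i j has_real_derivative F' t) (at t) \<and>
        (F' has_real_derivative F'' t) (at t) \<and> F' t < 0 \<and> F'' t < 0"
    and r_range: "\<forall>j\<in>{1..m}. 0 \<le> r j \<and> r j \<le> 1"
  shows "finite {x \<in> Wset n m r. isGNE n m a k R p x}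
         \<and> card {x \<in> Wset n m r. isGNE n m a k R p x} \<le> 2 ^ (n * (m + 1))"
proof -
  obtain DF where "\<forall>i\<in>{1..n}. \<forall>j\<in>{1..m}. \<forall>t\<in>{0<..<1}.
      (Ffun a k R p i j has_real_derivative DF i j t) (at t) \<and> DF i j t < 0"
    using F_deriv by metis
  then interpret fragile_cpr_game n m R p a k DF
    using R_gt p0 p1 a_range k_pos F_cont by unfold_locales
  show ?thesis
    by (rule card_GNE_le)
qed

end
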